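(* Let $n \in \mathbb N$ and let $F\colon\mathbb R_+^n\to \mathbb R_+$ be an amenable function. If there exist constants $a, c \in \mathbb{R}$ with $0<a\leqslant c$ such that $F(\mathbf x)\in[a,c]$ for every $\mathbf x\in\mathbb R_+^n\setminus\{(0,\dots,0)\}$, then $F$ is $(n)$-b-metric preserving with constant $K = \max\{1, \frac{c}{2a}\}$; that is, for every collection of b-metric spaces $(X_i,d_i)$, $i=1,\dots,n$, the function $D(\mathbf x,\mathbf y)=F(d_1(x_1,y_1),\dots,d_n(x_n,y_n))$ on $\prod_{i=1}^nX_i$ is a b-metric satisfying $D(\mathbf x,\mathbf y)\leqslant K(D(\mathbf x,\mathbf z)+D(\mathbf z,\mathbf y))$ for all $\mathbf x,\mathbf y,\mathbf z$.
   Context: $\mathbb R_+=[0,\infty)$. $F$ is amenable if $F(\mathbf x)=0\iff\mathbf x=(0,\dots,0)$. A b-metric on $X$ is $d\colon X^2\to\mathbb R_+$ with $d(x,y)=0\iff x=y$, $d(x,y)=d(y,x)$, and for some $K\geqslant1$, $d(x,z)\leqslant K(d(x,y)+d(y,z))$ for all $x,y,z$ (the relaxation constants of the spaces $(X_i,d_i)$ are arbitrary). *)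

theory Defs
  imports Complex_Main "HOL-Library.FuncSet"
begin

definition nonneg_vec :: "nat \<Rightarrow> real list \<Rightarrow> bool" where
  "nonneg_vec n v \<longleftrightarrow> length v = n \<and> (\<forall>t\<in>set v. t \<ge> 0)"

definition amenable :: "nat \<Rightarrow> (real list \<Rightarrow> real) \<Rightarrow> bool" where
  "amenable n F \<longleftrightarrow> (\<forall>v. nonneg_vec n v \<longrightarrow> (F v = 0 \<longleftrightarrow> v = replicate n 0))"

definition bmetric_on :: "'a set \<Rightarrow> ('a \<Rightarrow> 'a \<Rightarrow> real) \<Rightarrow> real \<Rightarrow> bool" where
  "bmetric_on S d K \<longleftrightarrow> K \<ge> 1 \<and>
     (\<forall>x\<in>S. \<forall>y\<in>S. d x y \<ge> 0 \<and> (d x y = 0 \<longleftrightarrow> x = y) \<and> d x y = d y x) \<and>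
     (\<forall>x\<in>S. \<forall>y\<in>S. \<forall>z\<in>S. d x z \<le> K * (d x y + d y z))"

definition is_bmetric :: "'a set \<Rightarrow> ('a \<Rightarrow> 'a \<Rightarrow> real) \<Rightarrow> bool" where
  "is_bmetric S d \<longleftrightarrow> (\<exists>K. bmetric_on S d K)"

definition prod_dist :: "nat \<Rightarrow> (real list \<Rightarrow> real) \<Rightarrow> (nat \<Rightarrow> 'a \<Rightarrow> 'a \<Rightarrow> real)
    \<Rightarrow> (nat \<Rightarrow> 'a) \<Rightarrow> (nat \<Rightarrow> 'a) \<Rightarrow> real" where
  "prod_dist n F d x y = F (map (\<lambda>i. d i (x i) (y i)) [0..<n])"

end

theory Submission
  imports Defs
begin

text \<open>Amenability makes the induced function a semimetric on the product. The relaxed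
  triangle inequality \<open>D x z \<le> K (D x y + D y z)\<close> is trivial when two of the points
  coincide; otherwise the right-hand side is at least \<open>2 a K\<close> while the left-hand side
  is at most \<open>c\<close>, so \<open>K = c / (2 a)\<close> suffices.\<close>

definition semimetric_on :: "'a set \<Rightarrow> ('a \<Rightarrow> 'a \<Rightarrow> real) \<Rightarrow> bool" where
  "semimetric_on S d \<longleftrightarrow>
     (\<forall>x\<in>S. \<forall>y\<in>S. d x y \<ge> 0 \<and> (d x y = 0 \<longleftrightarrow> x = y) \<and> d x y = d y x)"

lemma bmetric_on_iff_semimetric_on:
  "bmetric_on S d K \<longleftrightarrow> K \<ge> 1 \<and> semimetric_on S d \<and>
     (\<forall>x\<in>S. \<forall>y\<in>S. \<forall>z\<in>S. d x z \<le> K * (d x y + d y z))"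
  unfolding bmetric_on_def semimetric_on_def by blast

lemma bmetric_on_imp_semimetric_on: "bmetric_on S d K \<Longrightarrow> semimetric_on S d"
  by (simp add: bmetric_on_iff_semimetric_on)

lemma bmetric_on_if_nonzero_values_between:
  fixes a c :: real
  assumes semi: "semimetric_on S d" and "0 < a"
    and between: "\<And>x y. x \<in> S \<Longrightarrow> y \<in> S \<Longrightarrow> x \<noteq> y \<Longrightarrow> a \<le> d x y \<and> d x y \<le> c"
  shows "bmetric_on S d (max 1 (c / (2 * a)))"
  unfolding bmetric_on_iff_semimetric_on
proof (intro conjI ballI)
  define K where "K = max 1 (c / (2 * a))"
  have "K \<ge> 1" and c_le: "c \<le> K * (2 * a)"
    using \<open>0 < a\<close> by (auto simp: K_def field_simps max_def)
  then show "max 1 (c / (2 * a)) \<ge> 1" by (simp add: K_def)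
  show "semimetric_on S d" by (rule semi)
  fix x y z assume S: "x \<in> S" "y \<in> S" "z \<in> S"
  have nonneg: "0 \<le> d u v" and zero: "d u v = 0 \<longleftrightarrow> u = v" if "u \<in> S" "v \<in> S" for u v
    using semi that by (auto simp: semimetric_on_def)
  have "d x z \<le> K * (d x y + d y z)"
  proof (cases "x = y \<or> y = z")
    case True
    then have "d x z \<le> d x y + d y z"
      using S nonneg by (auto simp: zero)
    also have "\<dots> \<le> K * (d x y + d y z)"
      using \<open>K \<ge> 1\<close> S nonneg mult_right_mono[of 1 K "d x y + d y z"] by simp
    finally show ?thesis .
  next
    case False
    show ?thesis
    proof (cases "x = z")
      case True
      then have "d x z = 0" using S by (simp add: zero)
      then show ?thesis
        using S nonneg \<open>K \<ge> 1\<close> by simp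
    next
      case False
      then have "d x z \<le> c" using between S by blast
      also have "\<dots> \<le> K * (2 * a)" by (rule c_le)
      also have "\<dots> \<le> K * (d x y + d y z)"
        using between[of x y] between[of y z] \<open>\<not> (x = y \<or> y = z)\<close> S \<open>K \<ge> 1\<close>
        by (intro mult_left_mono) auto
      finally show ?thesis .
    qed
  qed
  then show "d x z \<le> max 1 (c / (2 * a)) * (d x y + d y z)" by (simp add: K_def)
qed

lemma nonneg_vec_coordinate_dists:
  assumes "\<forall>i<n. semimetric_on (X i) (d i)" "x \<in> PiE {..<n} X" "y \<in> PiE {..<n} X"
  shows "nonneg_vec n (map (\<lambda>i. d i (x i) (y i)) [0..<n])"
  using assms by (auto simp: nonneg_vec_def semimetric_on_def PiE_iff)

lemma coordinate_dists_eq_zero_iff: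
  assumes "\<forall>i<n. semimetric_on (X i) (d i)" "x \<in> PiE {..<n} X" "y \<in> PiE {..<n} X"
  shows "map (\<lambda>i. d i (x i) (y i)) [0..<n] = replicate n 0 \<longleftrightarrow> x = y"
proof -
  have "map (\<lambda>i. d i (x i) (y i)) [0..<n] = replicate n 0 \<longleftrightarrow> (\<forall>i<n. d i (x i) (y i) = 0)"
    by (auto simp: list_eq_iff_nth_eq)
  also have "\<dots> \<longleftrightarrow> (\<forall>i<n. x i = y i)"
    using assms by (auto simp: semimetric_on_def PiE_iff)
  also have "\<dots> \<longleftrightarrow> x = y"
    using assms(2,3) by (metis PiE_ext lessThan_iff)
  finally show ?thesis .
qed

lemma semimetric_on_prod_dist:
  assumes "\<forall>v. nonneg_vec n v \<longrightarrow> F v \<ge> 0" "amenable n F"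
    and semi: "\<forall>i<n. semimetric_on (X i) (d i)"
  shows "semimetric_on (PiE {..<n} X) (prod_dist n F d)"
  unfolding semimetric_on_def
proof (intro ballI conjI)
  fix x y assume xy: "x \<in> PiE {..<n} X" "y \<in> PiE {..<n} X"
  note vec = nonneg_vec_coordinate_dists[OF semi xy]
  show "prod_dist n F d x y \<ge> 0"
    using assms(1) vec by (simp add: prod_dist_def)
  show "prod_dist n F d x y = 0 \<longleftrightarrow> x = y"
    using assms(2) vec coordinate_dists_eq_zero_iff[OF semi xy]
    by (simp add: prod_dist_def amenable_def)
  have "map (\<lambda>i. d i (x i) (y i)) [0..<n] = map (\<lambda>i. d i (y i) (x i)) [0..<n]"
    using semi xy by (auto simp: semimetric_on_def PiE_iff)
  then show "prod_dist n F d x y = prod_dist n F d y x"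
    unfolding prod_dist_def by (rule arg_cong)
qed

theorem proposition3p2:
  fixes n :: nat and F :: "real list \<Rightarrow> real" and a c :: real
  assumes "\<forall>v. nonneg_vec n v \<longrightarrow> F v \<ge> 0"
    and "amenable n F"
    and "0 < a" and "a \<le> c"
    and "\<forall>v. nonneg_vec n v \<and> v \<noteq> replicate n 0 \<longrightarrow> a \<le> F v \<and> F v \<le> c"
  shows "\<forall>(X :: nat \<Rightarrow> 'a set) d. (\<forall>i<n. is_bmetric (X i) (d i)) \<longrightarrow>
           bmetric_on (PiE {..<n} X) (prod_dist n F d) (max 1 (c / (2 * a)))"
proof (intro allI impI)
  fix X :: "nat \<Rightarrow> 'a set" and d
  assume "\<forall>i<n. is_bmetric (X i) (d i)"
  then have semi: "\<forall>i<n. semimetric_on (X i) (d i)"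
    by (auto simp: is_bmetric_def intro: bmetric_on_imp_semimetric_on)
  show "bmetric_on (PiE {..<n} X) (prod_dist n F d) (max 1 (c / (2 * a)))"
  proof (rule bmetric_on_if_nonzero_values_between)
    show "semimetric_on (PiE {..<n} X) (prod_dist n F d)"
      using assms(1,2) semi by (rule semimetric_on_prod_dist)
    show "0 < a" by (rule assms(3))
    fix x y assume "x \<in> PiE {..<n} X" "y \<in> PiE {..<n} X" "x \<noteq> y"
    then show "a \<le> prod_dist n F d x y \<and> prod_dist n F d x y \<le> c"
      using assms(5) nonneg_vec_coordinate_dists[OF semi] coordinate_dists_eq_zero_iff[OF semi]
      by (simp add: prod_dist_def)
  qed
qed

end
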